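(* Let $\alpha\in(1,2)$ and let $p\ge2$ be an integer. There is a constant $C^L_{p,\alpha}$ depending only on $p$ and $\alpha$ such that for every $n\ge1$, $$\|n^{-\alpha}A_n^L\|_q\le C^L_{p,\alpha},\qquad q\in\{1,2,\infty\}.$$
   Context: Fix integers $p\ge2$, $n\ge1$. The uniform open knot sequence on $[0,1]$ is $\xi_1=\dots=\xi_{p+1}=0$, $\xi_{i+p+1}=i/n$ for $i=0,\dots,n$, $\xi_{p+n+1}=\dots=\xi_{2p+n+1}=1$. The B-splines are defined by $N^0_i=\mathbf 1_{[\xi_i,\xi_{i+1})}$ and $N^k_i(x)=\frac{x-\xi_i}{\xi_{i+k}-\xi_i}N^{k-1}_i(x)+\frac{\xi_{i+k+1}-x}{\xi_{i+k+1}-\xi_{i+1}}N^{k-1}_{i+1}(x)$ (fractions with zero denominator are zero); $N^p_i$, $i=1,\dots,n+p$, are the degree-$p$ B-splines. The Greville abscissae are $\eta_i=\frac{\xi_{i+1}+\dots+\xi_{i+p}}{p}$, $i=2,\dots,n+p-1$. For $\alpha\in(1,2)$, $D^\alpha_{0,x}u(x)=\frac{1}{\Gamma(2-\alpha)}\frac{d^2}{dx^2}\int_0^x(x-y)^{1-\alpha}u(y)\,dy$. $A_n^L$ is the $(n+p-2)\times(n+p-2)$ matrix with $(A_n^L)_{i,j}=D^\alpha_{0,x}N^p_{j+1}(\eta_{i+1})$. $\|\cdot\|_1$, $\|\cdot\|_\infty$ are the maximum absolute column sum and row sum norms, $\|\cdot\|_2$ the spectral norm. *)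

theory Defs
  imports "HOL-Analysis.Analysis"
begin

text \<open>Uniform open knot vector on [0,1], 1-indexed: knot p n i for i = 1..2p+n+1.\<close>
definition knot :: "nat \<Rightarrow> nat \<Rightarrow> nat \<Rightarrow> real" where
  "knot p n i = (if i \<le> p + 1 then 0
                 else if i \<le> p + n + 1 then (real i - real p - 1) / real n
                 else 1)"

text \<open>B-splines via Cox-de Boor recursion; division by zero yields 0 in Isabelle,
  matching the convention that fractions with zero denominator are zero.\<close>
fun bspline :: "nat \<Rightarrow> nat \<Rightarrow> nat \<Rightarrow> nat \<Rightarrow> real \<Rightarrow> real" where
  "bspline p n 0 i x = (if knot p n i \<le> x \<and> x < knot p n (Suc i) then 1 else 0)"
| "bspline p n (Suc k) i x =
     (x - knot p n i) / (knot p n (i + Suc k) - knot p n i) * bspline p n k i x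
   + (knot p n (i + Suc k + 1) - x) / (knot p n (i + Suc k + 1) - knot p n (i + 1))
       * bspline p n k (Suc i) x"

definition greville :: "nat \<Rightarrow> nat \<Rightarrow> nat \<Rightarrow> real" where
  "greville p n i = (\<Sum>k = i + 1..i + p. knot p n k) / real p"

definition RL_deriv :: "real \<Rightarrow> (real \<Rightarrow> real) \<Rightarrow> real \<Rightarrow> real" where
  "RL_deriv \<alpha> u x = (1 / Gamma (2 - \<alpha>)) *
     (deriv ^^ 2) (\<lambda>t. integral {0..t} (\<lambda>y. (t - y) powr (1 - \<alpha>) * u y)) x"

text \<open>The matrix A_n^L, entries indexed by i, j in {1..n+p-2}.\<close>
definition AL :: "nat \<Rightarrow> nat \<Rightarrow> real \<Rightarrow> nat \<Rightarrow> nat \<Rightarrow> real" where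
  "AL p n \<alpha> i j = RL_deriv \<alpha> (bspline p n p (j + 1)) (greville p n (i + 1))"

definition norm1 :: "nat \<Rightarrow> (nat \<Rightarrow> nat \<Rightarrow> real) \<Rightarrow> real" where
  "norm1 N M = Max ((\<lambda>j. \<Sum>i = 1..N. \<bar>M i j\<bar>) ` {1..N})"

definition norminf :: "nat \<Rightarrow> (nat \<Rightarrow> nat \<Rightarrow> real) \<Rightarrow> real" where
  "norminf N M = Max ((\<lambda>i. \<Sum>j = 1..N. \<bar>M i j\<bar>) ` {1..N})"

definition norm2 :: "nat \<Rightarrow> (nat \<Rightarrow> nat \<Rightarrow> real) \<Rightarrow> real" where
  "norm2 N M = Sup {sqrt (\<Sum>i = 1..N. (\<Sum>j = 1..N. M i j * x j)\<^sup>2) | x.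
                      (\<Sum>j = 1..N. (x j)\<^sup>2) \<le> 1}"

end

theory Submission
  imports Defs
begin

(* Write beta = 1 - alpha in (-1, 0) and I u (t) = integral over [0, t] of (t - y)^beta u(y), so that
   (A_n^L)_ij = (I N_j)''(eta_i) / Gamma(2 - alpha). A B-spline N of degree p >= 2 is C^1 with a
   bounded, piecewise continuous second derivative, and differentiating twice under the weakly
   singular kernel gives (I N)''(t) = t^beta N'(0) + I(N'')(t). Since |N'| <= C n, |N''| <= C n^2,
   the support has length <= (p + 1)/n and eta_i >= 1/(p n), the O(p) entries near the diagonal are
   O(n^alpha). Entries above the band vanish, because supp N_j lies to the right of eta_i. Below the
   band t stays away from supp N_j, so (I N_j)''(t) = beta (beta - 1) times the integral of
   (t - y)^(beta - 2) N_j(y), which is O(n^alpha (i - j - p)^(-1 - alpha)); as alpha > 1 these entries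
   are summable. So all row and column sums of n^(-alpha) A_n^L are bounded uniformly in n, which
   bounds the 1- and infinity-norms, and the Schur test bounds the spectral norm. *)

lemma knot_eq_min: "n \<ge> 1 \<Longrightarrow> knot p n m = real (min (m - (p + 1)) n) / real n"
  unfolding knot_def by (auto simp: min_def of_nat_diff)

lemma knot_mono: "n \<ge> 1 \<Longrightarrow> m \<le> m' \<Longrightarrow> knot p n m \<le> knot p n m'"
  by (simp add: knot_eq_min divide_right_mono)

lemma knot_nonneg: "n \<ge> 1 \<Longrightarrow> 0 \<le> knot p n m"
  by (simp add: knot_eq_min)

lemma knot_le_1: "n \<ge> 1 \<Longrightarrow> knot p n m \<le> 1"
  by (simp add: knot_eq_min)

lemma knot_eq_0_iff: "n \<ge> 1 \<Longrightarrow> knot p n m = 0 \<longleftrightarrow> m \<le> p + 1"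
  by (auto simp: knot_eq_min)

lemma knot_diff_eq:
  assumes "n \<ge> 1" "p + 1 \<le> m" "m \<le> m'" "m' \<le> n + p + 1"
  shows "knot p n m' - knot p n m = real (m' - m) / real n"
  using assms by (simp add: knot_eq_min min_absorb1 of_nat_diff diff_divide_distrib)

lemma knot_diff_le: "n \<ge> 1 \<Longrightarrow> knot p n (m + k) - knot p n m \<le> real k / real n"
proof -
  assume n: "n \<ge> 1"
  have "real (min (m + k - (p + 1)) n) - real (min (m - (p + 1)) n) \<le> real k" by linarith
  hence "(real (min (m + k - (p + 1)) n) - real (min (m - (p + 1)) n)) / n \<le> real k / n"
    by (rule divide_right_mono) simp
  thus ?thesis using n by (simp add: knot_eq_min diff_divide_distrib)
qed

lemma finite_range_knot: "n \<ge> 1 \<Longrightarrow> finite (range (knot p n))"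
proof -
  assume n: "n \<ge> 1"
  have "range (knot p n) \<subseteq> (\<lambda>k. real k / real n) ` {..n}"
    by (auto simp: knot_eq_min[OF n] intro!: image_eqI[where x = "min (_ - (p + 1)) n"])
  thus ?thesis by (rule finite_subset) auto
qed

text \<open>Distinct knots are at least \<open>1/n\<close> apart, so dividing by a knot difference costs at most a factor \<open>n\<close>
  (a zero difference gives division by zero, i.e. \<open>0\<close>).\<close>
lemma abs_divide_knot_diff_le:
  assumes n: "n \<ge> 1" and "m \<le> m'"
  shows "\<bar>c / (knot p n m' - knot p n m)\<bar> \<le> \<bar>c\<bar> * n"
proof (cases "knot p n m' = knot p n m")
  case False
  define a where "a = min (m - (p + 1)) n"
  define b where "b = min (m' - (p + 1)) n"
  have e: "knot p n m' - knot p n m = (real b - real a) / n"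
    unfolding a_def b_def knot_eq_min[OF n] by (rule diff_divide_distrib[symmetric])
  have "a \<le> b" using \<open>m \<le> m'\<close> by (auto simp: a_def b_def)
  moreover have "a \<noteq> b" using False e by auto
  ultimately have "real a + 1 \<le> real b" by linarith
  hence "\<bar>c\<bar> * n * 1 \<le> \<bar>c\<bar> * n * (real b - real a)" by (intro mult_left_mono) auto
  thus ?thesis using \<open>real a + 1 \<le> real b\<close> by (simp add: e abs_divide divide_le_eq abs_mult)
qed simp

lemma knot_interior_simple:
  assumes n: "n \<ge> 1" and "0 < knot p n m" "knot p n m < 1"
  shows "knot p n (m - 1) < knot p n m \<and> knot p n m < knot p n (m + 1)"
proof -
  have "0 < m - (p + 1)" "m - (p + 1) < n"
    using assms by (auto simp: knot_eq_min zero_less_divide_iff divide_less_eq)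
  hence "knot p n m - knot p n (m - 1) = 1 / n" "knot p n (m + 1) - knot p n m = 1 / n"
    using knot_diff_eq[OF n, of p "m - 1" m] knot_diff_eq[OF n, of p m "m + 1"] by auto
  moreover have "0 < 1 / real n" using n by simp
  ultimately show ?thesis by linarith
qed

lemma bspline_support:
  assumes n: "n \<ge> 1"
  shows "bspline p n k i x \<noteq> 0 \<Longrightarrow> knot p n i \<le> x \<and> x < knot p n (i + k + 1)"
proof (induction k arbitrary: i)
  case 0 thus ?case by (auto split: if_splits)
next
  case (Suc k)
  have "knot p n (i + k + 1) \<le> knot p n (i + Suc k + 1)" "knot p n i \<le> knot p n (i + 1)"
    by (simp_all add: knot_mono[OF n])
  moreover have "bspline p n k i x \<noteq> 0 \<or> bspline p n k (Suc i) x \<noteq> 0" using Suc.prems by auto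
  ultimately show ?case using Suc.IH[of i] Suc.IH[of "Suc i"] by auto
qed

lemma abs_divide_mult_le:
  fixes a b y c :: real
  assumes "\<bar>y\<bar> \<le> c" and "y \<noteq> 0 \<Longrightarrow> 0 \<le> a \<and> a \<le> b"
  shows "\<bar>a / b * y\<bar> \<le> c"
proof (cases "y = 0")
  case False
  with assms(2) have "\<bar>a / b\<bar> \<le> 1" by (cases "b = 0") (auto simp: abs_div_pos divide_le_eq_1)
  hence "\<bar>a / b\<bar> * \<bar>y\<bar> \<le> 1 * c" using assms(1) by (intro mult_mono) auto
  thus ?thesis by (simp add: abs_mult)
qed (use assms in simp)

lemma bspline_Suc_fun:
  "bspline p n (Suc k) i = (\<lambda>y. (y - knot p n i) * inverse (knot p n (i + Suc k) - knot p n i) * bspline p n k i y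
     + (knot p n (i + Suc k + 1) - y) * inverse (knot p n (i + Suc k + 1) - knot p n (i + 1)) * bspline p n k (Suc i) y)"
  by (rule ext) (simp only: bspline.simps divide_inverse)

lemma abs_bspline_le: "n \<ge> 1 \<Longrightarrow> \<bar>bspline p n k i x\<bar> \<le> 2 ^ k"
proof (induction k arbitrary: i)
  case (Suc k)
  have a: "\<bar>(x - knot p n i) / (knot p n (i + Suc k) - knot p n i) * bspline p n k i x\<bar> \<le> 2 ^ k"
    by (rule abs_divide_mult_le[OF Suc.IH[OF Suc.prems]]) (use bspline_support[OF Suc.prems, of p k i x] in auto)
  have b: "\<bar>(knot p n (i + Suc k + 1) - x) / (knot p n (i + Suc k + 1) - knot p n (i + 1))
      * bspline p n k (Suc i) x\<bar> \<le> 2 ^ k"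
    by (rule abs_divide_mult_le[OF Suc.IH[OF Suc.prems]]) (use bspline_support[OF Suc.prems, of p k "Suc i" x] in auto)
  show ?case
    unfolding bspline.simps(2)[of p n k i x] by (rule order_trans[OF abs_triangle_ineq]) (use a b in simp)
qed simp

lemma bspline_at_0_nonzero:
  assumes n: "n \<ge> 1"
  shows "bspline p n k i 0 \<noteq> 0 \<Longrightarrow> i + k = p + 1"
proof (induction k arbitrary: i)
  case 0
  hence "knot p n i \<le> 0" "0 < knot p n (Suc i)" by (auto split: if_splits)
  hence "knot p n i = 0" "knot p n (Suc i) \<noteq> 0" using knot_nonneg[OF n, of p i] by auto
  thus ?case using knot_eq_0_iff[OF n] by auto
next
  case (Suc k)
  show ?case
  proof (cases "bspline p n k i 0 = 0")
    case False
    with Suc.IH have "knot p n i = 0" using knot_eq_0_iff[OF n] by fastforce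
    hence "bspline p n k (Suc i) 0 \<noteq> 0" using Suc.prems by auto
    from Suc.IH[OF this] show ?thesis by simp
  qed (use Suc.IH[of "Suc i"] Suc.prems in auto)
qed

text \<open>The B-spline derivative formula
  \<open>(N\<^sup>k\<^sub>i)' = k (N\<^sup>k\<^sup>-\<^sup>1\<^sub>i / (\<xi>\<^sub>i\<^sub>+\<^sub>k - \<xi>\<^sub>i) - N\<^sup>k\<^sup>-\<^sup>1\<^sub>i\<^sub>+\<^sub>1 / (\<xi>\<^sub>i\<^sub>+\<^sub>k\<^sub>+\<^sub>1 - \<xi>\<^sub>i\<^sub>+\<^sub>1))\<close>,
  applied to an arbitrary family \<open>f\<close> in place of the \<open>N\<^sup>k\<^sup>-\<^sup>1\<close>.\<close>
definition knot_dq :: "nat \<Rightarrow> nat \<Rightarrow> nat \<Rightarrow> (nat \<Rightarrow> real \<Rightarrow> real) \<Rightarrow> nat \<Rightarrow> real \<Rightarrow> real" where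
  "knot_dq p n k f i x = real k * (f i x / (knot p n (i + k) - knot p n i)
     - f (i + 1) x / (knot p n (i + k + 1) - knot p n (i + 1)))"

definition bspline_deriv :: "nat \<Rightarrow> nat \<Rightarrow> nat \<Rightarrow> nat \<Rightarrow> real \<Rightarrow> real" where
  "bspline_deriv p n k = knot_dq p n k (bspline p n (k - 1))"

definition bspline_deriv2 :: "nat \<Rightarrow> nat \<Rightarrow> nat \<Rightarrow> nat \<Rightarrow> real \<Rightarrow> real" where
  "bspline_deriv2 p n k = knot_dq p n k (bspline_deriv p n (k - 1))"

lemma knot_dq_0 [simp]: "knot_dq p n 0 f i x = 0"
  by (simp add: knot_dq_def)

lemma abs_knot_dq_le:
  assumes n: "n \<ge> 1" and f: "\<And>j. \<bar>f j x\<bar> \<le> M"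
  shows "\<bar>knot_dq p n k f i x\<bar> \<le> 2 * real k * M * n"
proof -
  have "\<bar>f j x / (knot p n (j + k) - knot p n j)\<bar> \<le> M * n" for j
    using abs_divide_knot_diff_le[OF n, of j "j + k" "f j x" p] mult_right_mono[OF f[of j], of "real n"]
    by simp
  from this[of i] this[of "i + 1"]
  have "\<bar>f i x / (knot p n (i + k) - knot p n i) - f (i + 1) x / (knot p n (i + k + 1) - knot p n (i + 1))\<bar>
      \<le> 2 * M * n"
    by (simp add: add.assoc) (rule order_trans[OF abs_triangle_ineq4], simp)
  from mult_left_mono[OF this, of "real k"] show ?thesis by (simp add: knot_dq_def abs_mult ac_simps)
qed

lemma knot_dq_support:
  assumes n: "n \<ge> 1" and f: "\<And>j. f j x \<noteq> 0 \<Longrightarrow> knot p n j \<le> x \<and> x < knot p n (j + k)"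
    and "knot_dq p n k f i x \<noteq> 0"
  shows "knot p n i \<le> x \<and> x < knot p n (i + k + 1)"
proof -
  have "f i x \<noteq> 0 \<or> f (i + 1) x \<noteq> 0" using assms(3) by (auto simp: knot_dq_def)
  thus ?thesis
    using f[of i] f[of "i + 1"] knot_mono[OF n, of "i + k" "i + k + 1" p] knot_mono[OF n, of i "i + 1" p]
    by (auto simp: ac_simps)
qed

lemma has_real_derivative_knot_dq:
  assumes "\<And>j. (f j has_real_derivative f' j x) (at x)"
  shows "(knot_dq p n k f i has_real_derivative knot_dq p n k f' i x) (at x)"
  unfolding knot_dq_def[abs_def] by (intro DERIV_cmult DERIV_diff DERIV_cdivide assms)

lemma continuous_knot_dq:
  assumes "\<And>j. continuous F (f j)"
  shows "continuous F (knot_dq p n k f i)"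
  unfolding knot_dq_def[abs_def] divide_inverse by (intro continuous_intros assms)

lemma abs_bspline_deriv_le:
  assumes n: "n \<ge> 1" shows "\<bar>bspline_deriv p n k i x\<bar> \<le> real k * 2 ^ k * real n"
proof (cases k)
  case (Suc k')
  have "\<bar>bspline_deriv p n k i x\<bar> \<le> 2 * real k * 2 ^ k' * real n"
    unfolding bspline_deriv_def Suc by (rule abs_knot_dq_le[OF n]) (simp add: abs_bspline_le[OF n])
  thus ?thesis by (simp add: Suc algebra_simps)
qed (simp add: bspline_deriv_def)

lemma abs_bspline_deriv2_le:
  assumes n: "n \<ge> 1" shows "\<bar>bspline_deriv2 p n k i x\<bar> \<le> real k ^ 2 * 2 ^ k * real n ^ 2"
proof (cases k)
  case (Suc k')
  have "\<bar>bspline_deriv2 p n k i x\<bar> \<le> 2 * real k * (real k' * 2 ^ k' * real n) * n"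
    unfolding bspline_deriv2_def Suc by (rule abs_knot_dq_le[OF n]) (simp add: abs_bspline_deriv_le[OF n])
  also have "\<dots> = real k * real k' * 2 ^ k * real n ^ 2" by (simp add: Suc power2_eq_square)
  also have "\<dots> \<le> real k ^ 2 * 2 ^ k * real n ^ 2"
    by (intro mult_right_mono) (simp_all add: Suc power2_eq_square)
  finally show ?thesis .
qed (simp add: bspline_deriv2_def)

lemma bspline_deriv_support:
  assumes n: "n \<ge> 1" and "bspline_deriv p n k i x \<noteq> 0"
  shows "knot p n i \<le> x \<and> x < knot p n (i + k + 1)"
proof (cases k)
  case (Suc k')
  show ?thesis
    by (rule knot_dq_support[OF n, where f = "bspline p n k'"])
       (use assms bspline_support[OF n] Suc in \<open>auto simp: bspline_deriv_def\<close>)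
qed (use assms in \<open>simp add: bspline_deriv_def\<close>)

lemma bspline_deriv2_support:
  assumes n: "n \<ge> 1" and "bspline_deriv2 p n k i x \<noteq> 0"
  shows "knot p n i \<le> x \<and> x < knot p n (i + k + 1)"
proof (cases k)
  case (Suc k')
  show ?thesis
    by (rule knot_dq_support[OF n, where f = "bspline_deriv p n k'"])
       (use assms bspline_deriv_support[OF n] Suc in \<open>auto simp: bspline_deriv2_def\<close>)
qed (use assms in \<open>simp add: bspline_deriv2_def\<close>)

text \<open>Division by a zero knot span gives \<open>0\<close>; the hypotheses say that an outer span vanishes only
  together with the inner one, which is what makes the identity hold in the degenerate cases too.\<close>
lemma deriv_recurrence_algebra:
  fixes x k0 k1 kk1 kk2 P Q R K :: real
  assumes "kk1 - k0 = 0 \<Longrightarrow> kk1 - k1 = 0" and "kk2 - k1 = 0 \<Longrightarrow> kk1 - k1 = 0"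
  shows "(x - k0) / (kk1 - k0) * (K * (P - Q / (kk1 - k1))) + (kk2 - x) / (kk2 - k1) * (K * (Q / (kk1 - k1) - R))
       = K * (((x - k0) * P + (kk1 - x) / (kk1 - k1) * Q) / (kk1 - k0)
              - ((x - k1) / (kk1 - k1) * Q + (kk2 - x) * R) / (kk2 - k1))"
proof -
  define u where "u = inverse (kk1 - k0)"
  define v where "v = inverse (kk2 - k1)"
  define c where "c = inverse (kk1 - k1)"
  have "(x - k0) * u * (K * (P - Q * c)) + (kk2 - x) * v * (K * (Q * c - R))
        = K * (((x - k0) * P + (kk1 - x) * c * Q) * u - ((x - k1) * c * Q + (kk2 - x) * R) * v)"
  proof (cases "c = 0")
    case False
    hence "kk1 - k0 \<noteq> 0" "kk2 - k1 \<noteq> 0" using assms by (auto simp: c_def)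
    hence "(kk1 - k0) * u = 1" "(kk2 - k1) * v = 1" by (auto simp: u_def v_def)
    thus ?thesis by algebra
  qed algebra
  thus ?thesis by (simp add: u_def v_def c_def divide_inverse ac_simps)
qed

lemma indicator_has_real_derivative_0:
  fixes a b x :: real
  assumes "x \<noteq> a" "x \<noteq> b"
  shows "((\<lambda>y. if a \<le> y \<and> y < b then 1 else 0 :: real) has_real_derivative 0) (at x)"
proof -
  consider "x < a" | "a < x" "x < b" | "b < x" using assms by fastforce
  thus ?thesis
  proof cases
    case 1 thus ?thesis
      by (intro has_field_derivative_transform_within_open[OF DERIV_const, of "{..<a}"]) auto
  next
    case 2 thus ?thesis
      by (intro has_field_derivative_transform_within_open[OF DERIV_const, of "{a<..<b}"]) auto
  next
    case 3 thus ?thesis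
      by (intro has_field_derivative_transform_within_open[OF DERIV_const, of "{b<..}"]) auto
  qed
qed

lemma bspline_deriv_weighted_sum:
  assumes n: "n \<ge> 1"
  shows "(x - knot p n i) / (knot p n (i + Suc k) - knot p n i) * bspline_deriv p n k i x
      + (knot p n (i + Suc k + 1) - x) / (knot p n (i + Suc k + 1) - knot p n (i + 1)) * bspline_deriv p n k (Suc i) x
      = real k * (bspline p n k i x / (knot p n (i + Suc k) - knot p n i)
          - bspline p n k (Suc i) x / (knot p n (i + Suc k + 1) - knot p n (i + 1)))"
proof (cases k)
  case (Suc k')
  define k0 where "k0 = knot p n i"
  define k1 where "k1 = knot p n (Suc i)"
  define kk1 where "kk1 = knot p n (i + Suc k)"
  define kk2 where "kk2 = knot p n (i + Suc k + 1)"
  define P where "P = bspline p n k' i x / (knot p n (i + k) - k0)"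
  define Q where "Q = bspline p n k' (Suc i) x"
  define R where "R = bspline p n k' (Suc (Suc i)) x / (kk2 - knot p n (Suc (Suc i)))"
  have "k0 \<le> k1" "k1 \<le> kk1" "kk1 \<le> kk2"
    unfolding k0_def k1_def kk1_def kk2_def by (auto intro: knot_mono[OF n])
  hence "(x - k0) / (kk1 - k0) * (real k * (P - Q / (kk1 - k1)))
      + (kk2 - x) / (kk2 - k1) * (real k * (Q / (kk1 - k1) - R))
     = real k * (((x - k0) * P + (kk1 - x) / (kk1 - k1) * Q) / (kk1 - k0)
            - ((x - k1) / (kk1 - k1) * Q + (kk2 - x) * R) / (kk2 - k1))"
    by (intro deriv_recurrence_algebra) auto
  thus ?thesis
    by (simp add: Suc bspline_deriv_def knot_dq_def P_def Q_def R_def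
        k0_def k1_def kk1_def kk2_def)
qed (simp add: bspline_deriv_def)

lemma has_real_derivative_bspline:
  assumes n: "n \<ge> 1" and x: "x \<notin> range (knot p n)"
  shows "(bspline p n k i has_real_derivative bspline_deriv p n k i x) (at x)"
proof (induction k arbitrary: i)
  case 0
  have "bspline p n 0 i = (\<lambda>y. if knot p n i \<le> y \<and> y < knot p n (Suc i) then 1 else 0)"
    by (rule ext) simp
  moreover have "x \<noteq> knot p n i" "x \<noteq> knot p n (Suc i)" using x by auto
  ultimately show ?case by (simp add: bspline_deriv_def indicator_has_real_derivative_0)
next
  case (Suc k)
  define A where "A = knot p n (i + Suc k) - knot p n i"
  define B where "B = knot p n (i + Suc k + 1) - knot p n (i + 1)"
  have e: "bspline p n (Suc k) i = (\<lambda>y. (y - knot p n i) / A * bspline p n k i y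
          + (knot p n (i + Suc k + 1) - y) / B * bspline p n k (Suc i) y)"
    by (rule ext) (simp only: bspline.simps A_def B_def)
  have d: "(bspline p n (Suc k) i has_real_derivative
      ((x - knot p n i) / A * bspline_deriv p n k i x + 1 / A * bspline p n k i x)
      + ((knot p n (i + Suc k + 1) - x) / B * bspline_deriv p n k (Suc i) x
         + -1 / B * bspline p n k (Suc i) x)) (at x)"
    unfolding e by (intro DERIV_add DERIV_mult' Suc.IH DERIV_cdivide) (auto intro!: derivative_eq_intros)
  have "(x - knot p n i) / A * bspline_deriv p n k i x
      + (knot p n (i + Suc k + 1) - x) / B * bspline_deriv p n k (Suc i) x
      = real k * (bspline p n k i x / A - bspline p n k (Suc i) x / B)"
    unfolding A_def B_def by (rule bspline_deriv_weighted_sum[OF n])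
  moreover have "bspline_deriv p n (Suc k) i x = real k * (bspline p n k i x / A - bspline p n k (Suc i) x / B)
      + (bspline p n k i x / A - bspline p n k (Suc i) x / B)"
    by (simp add: bspline_deriv_def knot_dq_def A_def B_def distrib_right)
  moreover have "1 / A * bspline p n k i x = bspline p n k i x / A"
    "-1 / B * bspline p n k (Suc i) x = - (bspline p n k (Suc i) x / B)" by simp_all
  ultimately have fin: "((x - knot p n i) / A * bspline_deriv p n k i x + 1 / A * bspline p n k i x)
      + ((knot p n (i + Suc k + 1) - x) / B * bspline_deriv p n k (Suc i) x
         + -1 / B * bspline p n k (Suc i) x) = bspline_deriv p n (Suc k) i x"
    by linarith
  show ?case using d unfolding fin .
qed

lemma has_real_derivative_bspline_deriv:
  "n \<ge> 1 \<Longrightarrow> x \<notin> range (knot p n) \<Longrightarrow>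
     (bspline_deriv p n k i has_real_derivative bspline_deriv2 p n k i x) (at x)"
  unfolding bspline_deriv_def bspline_deriv2_def
  by (intro has_real_derivative_knot_dq has_real_derivative_bspline[unfolded bspline_deriv_def])

lemma isCont_if_less:
  fixes f g :: "real \<Rightarrow> real"
  assumes f: "isCont f x" and g: "isCont g x" and fg: "x = c \<Longrightarrow> f c = g c"
  shows "isCont (\<lambda>y. if y < c then f y else g y) x"
proof -
  consider "x < c" | "c < x" | "x = c" by fastforce
  thus ?thesis
  proof cases
    case 1
    hence "eventually (\<lambda>y. f y = (if y < c then f y else g y)) (nhds x)"
      by (auto intro: eventually_mono[OF eventually_nhds_in_open[of "{..<c}"]])
    from isCont_cong[OF this] f show ?thesis by simp
  next
    case 2
    hence "eventually (\<lambda>y. g y = (if y < c then f y else g y)) (nhds x)"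
      by (auto intro: eventually_mono[OF eventually_nhds_in_open[of "{c<..}"]])
    from isCont_cong[OF this] g show ?thesis by simp
  next
    case 3
    have "isCont (\<lambda>y. if y \<le> c then f y else g y) c"
    proof (rule isCont_If_ge)
      show "continuous (at_left c) f" using f 3 continuous_at_split by blast
      have "continuous (at_right c) g" using g 3 continuous_at_split by blast
      thus "(g \<longlongrightarrow> f c) (at_right c)" using fg 3 by (simp add: continuous_within)
    qed
    moreover have "(\<lambda>y. if y < c then f y else g y) = (\<lambda>y. if y \<le> c then f y else g y)"
      using fg 3 by (auto simp: fun_eq_iff)
    ultimately show ?thesis using 3 by simp
  qed
qed

lemma continuous_at_right_bspline:
  assumes n: "n \<ge> 1"
  shows "continuous (at x within {x..}) (bspline p n k i)"
proof (induction k arbitrary: i)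
  case 0
  have "\<exists>d>0. \<forall>y\<in>{x..}. y \<noteq> x \<and> dist y x < d \<longrightarrow> bspline p n 0 i y = bspline p n 0 i x"
  proof -
    consider "x < knot p n i" | "knot p n i \<le> x" "x < knot p n (Suc i)" | "knot p n (Suc i) \<le> x"
      by fastforce
    thus ?thesis
    proof cases
      case 1 thus ?thesis by (intro exI[of _ "knot p n i - x"]) (auto simp: dist_real_def)
    next
      case 2 thus ?thesis by (intro exI[of _ "knot p n (Suc i) - x"]) (auto simp: dist_real_def)
    next
      case 3 thus ?thesis by (intro exI[of _ 1]) (auto simp: dist_real_def)
    qed
  qed
  thus ?case unfolding continuous_within by (intro tendsto_eventually) (simp add: eventually_at)
next
  case (Suc k)
  show ?case unfolding bspline_Suc_fun by (intro continuous_intros Suc.IH)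
qed

text \<open>Interior knots are simple, so B-splines of degree \<open>k \<ge> 1\<close> are continuous on \<open>(0, 1)\<close>.\<close>
lemma isCont_bspline:
  assumes n: "n \<ge> 1" and x: "0 < x" "x < 1" and k: "1 \<le> k"
  shows "isCont (bspline p n k i) x"
  using k
proof (induction k arbitrary: i rule: dec_induct)
  case base
  define a where "a = knot p n i"
  define b where "b = knot p n (Suc i)"
  define c where "c = knot p n (Suc (Suc i))"
  have e: "bspline p n 1 i = (\<lambda>y. if y < b then (if y < a then 0 else (y - a) * inverse (b - a))
                                 else (if y < c then (c - y) * inverse (c - b) else 0))"
    by (rule ext) (auto simp: a_def b_def c_def divide_inverse)
  show ?case unfolding e
  proof (intro isCont_if_less)
    assume "x = b"
    hence "knot p n (Suc i - 1) < knot p n (Suc i) \<and> knot p n (Suc i) < knot p n (Suc i + 1)"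
      using x by (intro knot_interior_simple[OF n]) (auto simp: b_def)
    hence "a < b" "b < c" by (auto simp: a_def b_def c_def)
    thus "(if b < a then 0 else (b - a) * inverse (b - a)) = (if b < c then (c - b) * inverse (c - b) else 0)"
      by auto
  qed (auto intro!: continuous_intros)
next
  case (step k)
  show ?case unfolding bspline_Suc_fun by (intro continuous_intros step.IH)
qed

lemma continuous_at_right_bspline_deriv:
  "n \<ge> 1 \<Longrightarrow> continuous (at x within {x..}) (bspline_deriv p n k i)"
  unfolding bspline_deriv_def by (intro continuous_knot_dq continuous_at_right_bspline)

lemma isCont_bspline_deriv:
  "n \<ge> 1 \<Longrightarrow> 0 < x \<Longrightarrow> x < 1 \<Longrightarrow> 2 \<le> k \<Longrightarrow> isCont (bspline_deriv p n k i) x"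
  unfolding bspline_deriv_def by (intro continuous_knot_dq isCont_bspline) auto

lemma continuous_on_0_if_isCont_interior:
  fixes f :: "real \<Rightarrow> real"
  assumes "continuous (at 0 within {0..}) f" "\<And>x. 0 < x \<Longrightarrow> x < 1 \<Longrightarrow> isCont f x" "T < 1"
  shows "continuous_on {0..T} f"
  unfolding continuous_on_eq_continuous_within
proof
  fix x assume x: "x \<in> {0..T}"
  show "continuous (at x within {0..T}) f"
  proof (cases "x = 0")
    case True
    thus ?thesis using continuous_within_subset[OF assms(1), of "{0..T}"] by auto
  next
    case False
    thus ?thesis using x assms by (auto intro: continuous_at_imp_continuous_at_within)
  qed
qed

lemma abs_diff_le_of_deriv_bound:
  fixes w w' :: "real \<Rightarrow> real"
  assumes cont: "continuous_on {a..b} w" and S: "finite S" and "a \<le> b"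
    and der: "\<And>y. y \<in> {a<..<b} - S \<Longrightarrow> (w has_real_derivative w' y) (at y)"
    and bnd: "\<And>y. y \<in> {a..b} \<Longrightarrow> \<bar>w' y\<bar> \<le> L"
  shows "\<bar>w b - w a\<bar> \<le> L * (b - a)"
proof -
  have "(w' has_integral (w b - w a)) {a..b}"
    using der by (intro fundamental_theorem_of_calculus_interior_strong[OF S \<open>a \<le> b\<close> _ cont])
      (auto simp: has_real_derivative_iff_has_vector_derivative)
  hence "norm (w b - w a) \<le> L * Henstock_Kurzweil_Integration.content (cbox a b)"
    using bnd \<open>a \<le> b\<close> by (intro has_integral_bound[where f = w']) (auto intro: order_trans[OF abs_ge_zero])
  thus ?thesis using \<open>a \<le> b\<close> by simp
qed

lemma lipschitz_on_constant_extension: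
  fixes w w' :: "real \<Rightarrow> real"
  assumes cont: "continuous_on {0..T} w" and S: "finite S" and "0 \<le> T"
    and der: "\<And>y. y \<in> {0<..<T} - S \<Longrightarrow> (w has_real_derivative w' y) (at y)"
    and bnd: "\<And>y. y \<in> {0..T} \<Longrightarrow> \<bar>w' y\<bar> \<le> L"
  shows "L-lipschitz_on UNIV (\<lambda>y. w (max 0 (min y T)))"
proof (rule lipschitz_onI)
  show "0 \<le> L" using bnd[of 0] \<open>0 \<le> T\<close> by auto
  define cl where "cl y = max 0 (min y T)" for y :: real
  have lip: "\<bar>w (cl d) - w (cl c)\<bar> \<le> L * (cl d - cl c)" if "cl c \<le> cl d" for c d
    by (rule abs_diff_le_of_deriv_bound[OF continuous_on_subset[OF cont] S, where w' = w'])
      (use that der bnd \<open>0 \<le> T\<close> in \<open>auto simp: cl_def\<close>)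
  fix a b :: real
  have "\<bar>w (cl a) - w (cl b)\<bar> \<le> L * \<bar>cl a - cl b\<bar>"
    using lip[of a b] lip[of b a] by (cases "cl a \<le> cl b") (auto simp: abs_minus_commute)
  also have "\<dots> \<le> L * \<bar>a - b\<bar>" using \<open>0 \<le> L\<close> by (intro mult_left_mono) (auto simp: cl_def)
  finally show "dist (w (max 0 (min a T))) (w (max 0 (min b T))) \<le> L * dist a b"
    by (simp add: cl_def dist_real_def)
qed

lemma has_real_derivative_constant_extension:
  fixes w w' :: "real \<Rightarrow> real"
  assumes der: "\<And>y. y \<in> {0<..<T} - S \<Longrightarrow> (w has_real_derivative w' y) (at y)" and y: "y \<in> {0<..<T} - S"
  shows "((\<lambda>x. w (max 0 (min x T)) - w 0) has_real_derivative w' y) (at y)"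
proof -
  have "((\<lambda>x. w x - w 0) has_real_derivative w' y) (at y)"
    using der y by (auto intro!: derivative_eq_intros)
  thus ?thesis by (rule has_field_derivative_transform_within_open[where S = "{0<..<T}"]) (use y in auto)
qed

lemma has_real_derivative_constant_extension_neg:
  fixes w :: "real \<Rightarrow> real"
  assumes "y < 0"
  shows "((\<lambda>x. w (max 0 (min x T)) - w 0) has_real_derivative 0) (at y)"
  using assms by (intro has_field_derivative_transform_within_open[OF DERIV_const, where S = "{..<0}"]) auto

lemma integrable_powr_mult_continuous:
  fixes g :: "real \<Rightarrow> real"
  assumes g: "continuous_on {0..c} g" and "-1 < \<beta>"
  shows "(\<lambda>s. s powr \<beta> * g s) integrable_on {0..c}"
proof (cases "0 \<le> c")
  case True
  have "(\<lambda>s. g s * s powr \<beta>) absolutely_integrable_on {0..c}"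
  proof (rule absolutely_integrable_bounded_measurable_product_real)
    show "g \<in> borel_measurable (lebesgue_on {0..c})"
      using g by (intro continuous_imp_measurable_on_sets_lebesgue) auto
    show "bounded (g ` {0..c})" using g by (intro compact_imp_bounded compact_continuous_image) auto
    show "(\<lambda>s. s powr \<beta>) absolutely_integrable_on {0..c}"
      using integrable_on_powr_from_0[OF \<open>-1 < \<beta>\<close> True] by (intro nonnegative_absolutely_integrable_1) auto
  qed auto
  thus ?thesis by (simp add: mult.commute absolutely_integrable_on_def)
qed (simp add: integrable_on_empty)

lemma has_integral_reflect_interval:
  fixes f :: "real \<Rightarrow> real"
  assumes "(f has_integral I) {a..b}"
  shows "((\<lambda>y. f (a + b - y)) has_integral I) {a..b}"
proof -
  have "((\<lambda>x. f (-x)) has_integral I) {-b..-a}" using assms by simp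
  from has_integral_affinity'[OF this[unfolded box_real(2)[symmetric]], of 1 "-(a+b)"]
  show ?thesis by (simp add: algebra_simps)
qed

lemma has_integral_subinterval_of_vanishing:
  fixes f :: "real \<Rightarrow> real"
  assumes f: "f integrable_on {a..b}" and "a \<le> c" "c \<le> b" and f0: "\<And>s. s \<in> {c..b} \<Longrightarrow> f s = 0"
  shows "(f has_integral integral {a..b} f) {a..c}"
proof -
  have "integral {a..b} f = integral {a..c} f + integral {c..b} f"
    using assms by (intro Henstock_Kurzweil_Integration.integral_combine[symmetric]) auto
  moreover have "integral {c..b} f = 0"
    by (rule integral_unique, rule has_integral_is_0) (use f0 in auto)
  moreover have "f integrable_on {a..c}"
    by (rule integrable_subinterval_real[OF f]) (use assms in auto)
  ultimately show ?thesis by (simp add: has_integral_integral)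
qed

text \<open>The difference quotients of a Lipschitz function are dominated by \<open>L s\<^sup>\<beta>\<close>, which is integrable,
  so dominated convergence applies; as it needs pointwise convergence everywhere, the integrands are
  redefined as \<open>0\<close> on the finite exceptional set \<open>E\<close>.\<close>
lemma powr_convolution_diff_quotient_LIMSEQ:
  fixes v v' :: "real \<Rightarrow> real"
  assumes \<beta>: "-1 < \<beta>" and T: "0 \<le> T" and lip: "L-lipschitz_on UNIV v" and E: "finite E"
    and der: "\<And>s. s \<in> {0..T} - E \<Longrightarrow> (v has_real_derivative v' s) (at (t - s))"
    and X0: "\<And>k. X k \<noteq> 0" and X: "X \<longlonglongrightarrow> 0"
  shows "(\<lambda>s. s powr \<beta> * v' s) integrable_on {0..T}"
    and "(\<lambda>k. (integral {0..T} (\<lambda>s. s powr \<beta> * v (t + X k - s)) - integral {0..T} (\<lambda>s. s powr \<beta> * v (t - s)))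
           / X k) \<longlonglongrightarrow> integral {0..T} (\<lambda>s. s powr \<beta> * v' s)"
proof -
  define g where "g s = (if s \<in> E then 0 else s powr \<beta> * v' s)" for s
  define f where "f k s = (if s \<in> E then 0 else s powr \<beta> * ((v (t + X k - s) - v (t - s)) / X k))" for k s
  have L: "0 \<le> L" using lip by (rule lipschitz_on_nonneg)
  have vcont: "continuous_on UNIV v" using lip by (rule lipschitz_on_continuous_on)
  have int: "(\<lambda>s. s powr \<beta> * v (\<tau> - s)) integrable_on {0..T}" for \<tau>
    by (intro integrable_powr_mult_continuous[OF _ \<beta>] continuous_on_compose2[OF vcont])
      (auto intro!: continuous_intros)
  have fint: "f k integrable_on {0..T}" for k
  proof -
    have "(\<lambda>s. s powr \<beta> * ((v (t + X k - s) - v (t - s)) / X k)) integrable_on {0..T}"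
      by (intro integrable_powr_mult_continuous[OF _ \<beta>] continuous_intros continuous_on_compose2[OF vcont])
        (auto simp: X0)
    thus ?thesis by (rule integrable_spike_finite[OF E, rotated]) (auto simp: f_def)
  qed
  have hint: "(\<lambda>s. L * s powr \<beta>) integrable_on {0..T}"
    using integrable_on_cmult_left[OF integrable_on_powr_from_0[OF \<beta> T], of L] by simp
  have fle: "norm (f k s) \<le> L * s powr \<beta>" if "s \<in> {0..T}" for k s
  proof -
    have "\<bar>v (t + X k - s) - v (t - s)\<bar> \<le> L * \<bar>X k\<bar>"
      using lipschitz_onD[OF lip, of "t + X k - s" "t - s"] by (simp add: dist_real_def)
    hence "\<bar>(v (t + X k - s) - v (t - s)) / X k\<bar> \<le> L" using X0[of k] by (simp add: abs_divide divide_le_eq)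
    hence "s powr \<beta> * \<bar>(v (t + X k - s) - v (t - s)) / X k\<bar> \<le> s powr \<beta> * L" by (intro mult_left_mono) auto
    thus ?thesis using L by (auto simp: f_def abs_mult mult.commute)
  qed
  have flim: "(\<lambda>k. f k s) \<longlonglongrightarrow> g s" if "s \<in> {0..T}" for s
  proof (cases "s \<in> E")
    case False
    hence "((\<lambda>h. (v (t - s + h) - v (t - s)) / h) \<longlongrightarrow> v' s) (at 0)"
      using der that by (simp add: DERIV_def)
    hence "(\<lambda>k. (v (t - s + X k) - v (t - s)) / X k) \<longlonglongrightarrow> v' s"
      using X0 X unfolding tendsto_at_iff_sequentially by (auto simp: comp_def)
    from tendsto_mult_left[OF this, of "s powr \<beta>"] show ?thesis
      using False by (simp add: f_def g_def algebra_simps)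
  qed (simp add: f_def g_def)
  note DC = dominated_convergence[OF fint hint fle flim]
  show "(\<lambda>s. s powr \<beta> * v' s) integrable_on {0..T}"
    by (rule integrable_spike_finite[OF E _ DC(1)]) (simp add: g_def)
  have "integral {0..T} (f k)
      = (integral {0..T} (\<lambda>s. s powr \<beta> * v (t + X k - s)) - integral {0..T} (\<lambda>s. s powr \<beta> * v (t - s))) / X k" for k
  proof -
    have "integral {0..T} (f k) = integral {0..T} (\<lambda>s. (s powr \<beta> * v (t + X k - s) - s powr \<beta> * v (t - s)) / X k)"
      by (rule integral_spike[OF negligible_finite[OF E]]) (simp add: f_def right_diff_distrib)
    thus ?thesis using int by (simp add: integral_diff)
  qed
  moreover have "integral {0..T} g = integral {0..T} (\<lambda>s. s powr \<beta> * v' s)"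
    by (rule integral_spike[OF negligible_finite[OF E]]) (simp add: g_def)
  ultimately show "(\<lambda>k. (integral {0..T} (\<lambda>s. s powr \<beta> * v (t + X k - s))
      - integral {0..T} (\<lambda>s. s powr \<beta> * v (t - s))) / X k) \<longlonglongrightarrow> integral {0..T} (\<lambda>s. s powr \<beta> * v' s)"
    using DC(2) by simp
qed

lemma has_real_derivative_powr_convolution:
  fixes v v' :: "real \<Rightarrow> real"
  assumes \<beta>: "-1 < \<beta>" and T: "0 \<le> T" and lip: "L-lipschitz_on UNIV v" and E: "finite E"
    and der: "\<And>s. s \<in> {0..T} - E \<Longrightarrow> (v has_real_derivative v' s) (at (t - s))"
  shows "(\<lambda>s. s powr \<beta> * v' s) integrable_on {0..T}"
    and "((\<lambda>\<tau>. integral {0..T} (\<lambda>s. s powr \<beta> * v (\<tau> - s))) has_real_derivative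
          integral {0..T} (\<lambda>s. s powr \<beta> * v' s)) (at t)"
proof -
  note lim = powr_convolution_diff_quotient_LIMSEQ[OF \<beta> T lip E der]
  show "(\<lambda>s. s powr \<beta> * v' s) integrable_on {0..T}"
    using lim(1)[of "\<lambda>k. inverse (real (Suc k))"] LIMSEQ_inverse_real_of_nat by simp
  show "((\<lambda>\<tau>. integral {0..T} (\<lambda>s. s powr \<beta> * v (\<tau> - s))) has_real_derivative
          integral {0..T} (\<lambda>s. s powr \<beta> * v' s)) (at t)"
    unfolding DERIV_def tendsto_at_iff_sequentially comp_def using lim(2) by (auto simp: add_ac)
qed

text \<open>The Riemann-Liouville integral without its normalising factor \<open>1 / \<Gamma>(\<beta> + 1)\<close>.\<close>
definition RL_integral :: "real \<Rightarrow> (real \<Rightarrow> real) \<Rightarrow> real \<Rightarrow> real" where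
  "RL_integral \<beta> u t = integral {0..t} (\<lambda>y. (t - y) powr \<beta> * u y)"

lemma RL_deriv_eq: "RL_deriv \<alpha> u x = deriv (deriv (RL_integral (1 - \<alpha>) u)) x / Gamma (2 - \<alpha>)"
  by (simp add: RL_deriv_def RL_integral_def[abs_def] numeral_2_eq_2)

lemma RL_integral_eq_convolution:
  fixes w :: "real \<Rightarrow> real"
  assumes \<beta>: "-1 < \<beta>" and cont: "continuous_on {0..T} w" and \<tau>: "0 \<le> \<tau>" "\<tau> \<le> T"
  shows "RL_integral \<beta> w \<tau> = w 0 * (\<tau> powr (\<beta> + 1) / (\<beta> + 1))
           + integral {0..T} (\<lambda>s. s powr \<beta> * (w (max 0 (min (\<tau> - s) T)) - w 0))"
proof -
  define v where "v s = s powr \<beta> * (w (max 0 (min (\<tau> - s) T)) - w 0)" for s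
  have vint: "v integrable_on {0..T}"
    unfolding v_def using \<tau>
    by (intro integrable_powr_mult_continuous[OF _ \<beta>] continuous_intros continuous_on_compose2[OF cont])
      auto
  have fi: "(\<lambda>s. s powr \<beta> * w (\<tau> - s)) integrable_on {0..\<tau>}"
    using \<tau> by (intro integrable_powr_mult_continuous[OF _ \<beta>] continuous_on_compose2[OF cont])
      (auto intro!: continuous_intros)
  have "integral {0..T} v = integral {0..\<tau>} v + integral {\<tau>..T} v"
    using vint \<tau> by (intro Henstock_Kurzweil_Integration.integral_combine[symmetric]) auto
  also have "integral {\<tau>..T} v = 0"
    by (rule integral_unique, rule has_integral_is_0) (auto simp: v_def)
  also have "integral {0..\<tau>} v = integral {0..\<tau>} (\<lambda>s. s powr \<beta> * w (\<tau> - s) - w 0 * s powr \<beta>)"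
    by (rule integral_cong) (use \<tau> in \<open>auto simp: v_def algebra_simps\<close>)
  also have "\<dots> = integral {0..\<tau>} (\<lambda>s. s powr \<beta> * w (\<tau> - s)) - w 0 * (\<tau> powr (\<beta> + 1) / (\<beta> + 1))"
  proof -
    have gi: "((\<lambda>s. w 0 * s powr \<beta>) has_integral w 0 * (\<tau> powr (\<beta> + 1) / (\<beta> + 1))) {0..\<tau>}"
      by (intro has_integral_mult_right has_integral_powr_from_0 \<beta> \<tau>)
    show ?thesis using integral_diff[OF fi has_integral_integrable[OF gi]] integral_unique[OF gi] by simp
  qed
  also have "integral {0..\<tau>} (\<lambda>s. s powr \<beta> * w (\<tau> - s)) = RL_integral \<beta> w \<tau>"
    using has_integral_reflect_interval[OF integrable_integral[OF fi]]
    by (simp add: RL_integral_def integral_unique)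
  finally show ?thesis by (simp add: v_def)
qed

text \<open>Extending \<open>w\<close> constantly outside \<open>[0, T]\<close> and substituting \<open>s = \<tau> - y\<close> turns
  \<open>RL_integral \<beta> w \<tau>\<close> into \<open>w 0 \<tau>\<^sup>\<beta>\<^sup>+\<^sup>1 / (\<beta> + 1)\<close> plus a convolution of a Lipschitz function with
  \<open>s\<^sup>\<beta>\<close>, which is differentiated under the integral sign.\<close>
lemma has_real_derivative_RL_integral:
  fixes w w' :: "real \<Rightarrow> real"
  assumes \<beta>: "-1 < \<beta>" and t: "0 < t" "t < T" and cont: "continuous_on {0..T} w" and S: "finite S"
    and der: "\<And>y. y \<in> {0<..<T} - S \<Longrightarrow> (w has_real_derivative w' y) (at y)"
    and bnd: "\<And>y. y \<in> {0..T} \<Longrightarrow> \<bar>w' y\<bar> \<le> L"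
  shows "(\<lambda>y. (t - y) powr \<beta> * w' y) integrable_on {0..t}"
    and "(RL_integral \<beta> w has_real_derivative t powr \<beta> * w 0 + RL_integral \<beta> w' t) (at t)"
proof -
  define v where "v y = w (max 0 (min y T)) - w 0" for y
  define v' where "v' s = (if s < t then w' (t - s) else 0)" for s
  define E where "E = insert t ((\<lambda>y. t - y) ` S)"
  have lip: "L-lipschitz_on UNIV v"
    using lipschitz_on_constant_extension[OF cont S _ der bnd] t
    by (simp add: v_def lipschitz_on_def dist_real_def)
  have vder: "(v has_real_derivative v' s) (at (t - s))" if s: "s \<in> {0..T} - E" for s
  proof (cases "s < t")
    case True
    have "s \<notin> (\<lambda>y. t - y) ` S" using s by (simp add: E_def)
    hence "t - s \<in> {0<..<T} - S" using s t True by (auto intro: image_eqI[where x = "t - s"])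
    from has_real_derivative_constant_extension[where S = S and T = T, OF der this]
    show ?thesis using True by (simp add: v_def[abs_def] v'_def)
  next
    case False
    hence "t - s < 0" using s by (cases "s = t") (auto simp: E_def)
    thus ?thesis using has_real_derivative_constant_extension_neg False
      by (simp add: v_def[abs_def] v'_def)
  qed
  have "0 \<le> T" "finite E" using t S by (simp_all add: E_def)
  with vder have conv: "(\<lambda>s. s powr \<beta> * v' s) integrable_on {0..T}"
    "((\<lambda>\<tau>. integral {0..T} (\<lambda>s. s powr \<beta> * v (\<tau> - s))) has_real_derivative
      integral {0..T} (\<lambda>s. s powr \<beta> * v' s)) (at t)"
    using has_real_derivative_powr_convolution[OF \<beta> _ lip] by blast+
  have "((\<lambda>s. s powr \<beta> * v' s) has_integral integral {0..T} (\<lambda>s. s powr \<beta> * v' s)) {0..t}"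
    using conv(1) t by (intro has_integral_subinterval_of_vanishing) (auto simp: v'_def)
  hence "((\<lambda>s. s powr \<beta> * w' (t - s)) has_integral integral {0..T} (\<lambda>s. s powr \<beta> * v' s)) {0..t}"
    by (rule has_integral_spike_finite[where S = "{t}", rotated 2]) (auto simp: v'_def)
  from has_integral_reflect_interval[OF this]
  have RL': "((\<lambda>y. (t - y) powr \<beta> * w' y) has_integral integral {0..T} (\<lambda>s. s powr \<beta> * v' s)) {0..t}"
    by simp
  thus "(\<lambda>y. (t - y) powr \<beta> * w' y) integrable_on {0..t}" by blast
  have "((\<lambda>\<tau>. w 0 * (\<tau> powr (\<beta> + 1) / (\<beta> + 1)) + integral {0..T} (\<lambda>s. s powr \<beta> * v (\<tau> - s)))
      has_real_derivative w 0 * ((\<beta> + 1) * t powr \<beta> / (\<beta> + 1)) + integral {0..T} (\<lambda>s. s powr \<beta> * v' s)) (at t)"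
    using t \<beta> by (intro DERIV_add DERIV_cmult DERIV_cdivide conv(2)) (auto intro!: derivative_eq_intros)
  hence "(RL_integral \<beta> w has_real_derivative w 0 * ((\<beta> + 1) * t powr \<beta> / (\<beta> + 1))
      + integral {0..T} (\<lambda>s. s powr \<beta> * v' s)) (at t)"
    by (rule has_field_derivative_transform_within_open[where S = "{0<..<T}"])
      (use t RL_integral_eq_convolution[OF \<beta> cont] in \<open>auto simp: v_def\<close>)
  thus "(RL_integral \<beta> w has_real_derivative t powr \<beta> * w 0 + RL_integral \<beta> w' t) (at t)"
    using \<beta> RL' by (simp add: RL_integral_def integral_unique mult.commute)
qed

lemma has_real_derivative_integral_powr_kernel:
  fixes u :: "real \<Rightarrow> real"
  assumes ucont: "continuous_on {0..b} u" and x: "b < x"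
  shows "((\<lambda>x. integral {0..b} (\<lambda>y. c * (x - y) powr r * u y)) has_real_derivative
           integral {0..b} (\<lambda>y. c * r * (x - y) powr (r - 1) * u y)) (at x)"
proof -
  define U where "U = {b<..}"
  have "((\<lambda>x. integral (cbox 0 b) (\<lambda>y. c * (x - y) powr r * u y)) has_field_derivative
      integral (cbox 0 b) (\<lambda>y. c * (r * (x - y) powr (r - 1) * u y))) (at x within U)"
  proof (rule leibniz_rule_field_derivative[where fx = "\<lambda>x y. c * (r * (x - y) powr (r - 1) * u y)"])
    fix x y assume "x \<in> U" "y \<in> cbox 0 b"
    hence "y < x" by (auto simp: U_def)
    thus "((\<lambda>x. c * (x - y) powr r * u y) has_field_derivative c * (r * (x - y) powr (r - 1) * u y)) (at x within U)"
      by (auto intro!: derivative_eq_intros simp: powr_diff)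
  next
    fix x assume "x \<in> U"
    thus "(\<lambda>y. c * (x - y) powr r * u y) integrable_on cbox 0 b"
      by (auto simp: U_def intro!: integrable_continuous_interval continuous_intros ucont)
  next
    have "continuous_on (U \<times> {0..b}) (\<lambda>z. u (snd z))"
      by (rule continuous_on_compose2[OF ucont continuous_on_snd]) auto
    thus "continuous_on (U \<times> cbox 0 b) (\<lambda>(x, y). c * (r * (x - y) powr (r - 1) * u y))"
      by (auto simp: case_prod_unfold U_def intro!: continuous_intros)
  qed (use x in \<open>auto simp: U_def\<close>)
  thus ?thesis using at_within_open[of x U] x by (simp add: U_def ac_simps)
qed

lemma RL_integral_deriv2_beyond_support:
  fixes u :: "real \<Rightarrow> real"
  assumes "0 \<le> b" "b < t" and ucont: "continuous_on {0..b} u" and uz: "\<And>y. b \<le> y \<Longrightarrow> u y = 0"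
  shows "deriv (deriv (RL_integral \<beta> u)) t = \<beta> * (\<beta> - 1) * integral {0..b} (\<lambda>y. (t - y) powr (\<beta> - 2) * u y)"
proof -
  define G where "G r c x = integral {0..b} (\<lambda>y. c * (x - y) powr r * u y)" for r c x
  have G_deriv: "(G r c has_real_derivative G (r - 1) (c * r) x) (at x)" if "b < x" for r c x
    using has_real_derivative_integral_powr_kernel[OF ucont that] by (simp add: G_def[abs_def] ac_simps)
  have "RL_integral \<beta> u x = G \<beta> 1 x" if "b < x" for x
  proof -
    have "(\<lambda>y. (x - y) powr \<beta> * u y) integrable_on {0..b}"
      using that by (intro integrable_continuous_interval continuous_intros ucont) auto
    hence "((\<lambda>y. (x - y) powr \<beta> * u y) has_integral G \<beta> 1 x + 0) {0..x}"
      using that \<open>0 \<le> b\<close> by (intro has_integral_combine[where c = b] has_integral_is_0)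
        (auto simp: G_def uz integrable_integral)
    thus ?thesis by (simp add: RL_integral_def integral_unique)
  qed
  note RL_eq = this
  have dRL: "deriv (RL_integral \<beta> u) x = G (\<beta> - 1) \<beta> x" if x: "b < x" for x
  proof (rule DERIV_imp_deriv)
    show "(RL_integral \<beta> u has_real_derivative G (\<beta> - 1) \<beta> x) (at x)"
      using G_deriv[OF x, where r = \<beta> and c = 1, simplified]
      by (rule has_field_derivative_transform_within_open[where S = "{b<..}"]) (use x RL_eq in auto)
  qed
  have "deriv (deriv (RL_integral \<beta> u)) t = G (\<beta> - 2) (\<beta> * (\<beta> - 1)) t"
  proof (rule DERIV_imp_deriv)
    show "(deriv (RL_integral \<beta> u) has_real_derivative G (\<beta> - 2) (\<beta> * (\<beta> - 1)) t) (at t)"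
      using G_deriv[OF \<open>b < t\<close>, where r = "\<beta> - 1" and c = \<beta>, simplified]
      by (rule has_field_derivative_transform_within_open[where S = "{b<..}"]) (use \<open>b < t\<close> dRL in auto)
  qed
  thus ?thesis by (simp add: G_def mult.assoc)
qed

lemma has_integral_powr_reflected:
  fixes \<beta> a m :: real
  assumes "-1 < \<beta>" "a \<le> m"
  shows "((\<lambda>y. (m - y) powr \<beta>) has_integral (m - a) powr (\<beta> + 1) / (\<beta> + 1)) {a..m}"
proof -
  have "((\<lambda>s. s powr \<beta>) has_integral (m - a) powr (\<beta> + 1) / (\<beta> + 1)) {0..m - a}"
    using has_integral_powr_from_0[of \<beta> "m - a"] assms by simp
  from has_integral_affinity'[OF has_integral_reflect_interval[OF this, unfolded box_real(2)[symmetric]], of 1 "-a"]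
  show ?thesis by (simp add: algebra_simps)
qed

lemma abs_RL_integral_le_of_support:
  fixes f :: "real \<Rightarrow> real"
  assumes \<beta>: "-1 < \<beta>" "\<beta> < 0" and ab: "0 \<le> a" "a \<le> b"
    and fint: "(\<lambda>y. (t - y) powr \<beta> * f y) integrable_on {0..t}"
    and fb: "\<And>y. \<bar>f y\<bar> \<le> K" and fs: "\<And>y. f y \<noteq> 0 \<Longrightarrow> a \<le> y \<and> y < b"
  shows "\<bar>RL_integral \<beta> f t\<bar> \<le> K * (b - a) powr (\<beta> + 1) / (\<beta> + 1)"
proof -
  have K: "0 \<le> K" using fb[of 0] by simp
  define m where "m = min b t"
  show ?thesis
  proof (cases "a \<le> m")
    case False
    hence "RL_integral \<beta> f t = integral {0..t} (\<lambda>y. 0)"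
      unfolding RL_integral_def by (intro integral_cong) (use fs in \<open>force simp: m_def\<close>)
    thus ?thesis using K \<beta> by simp
  next
    case True
    define h where "h y = (if y \<in> cbox a m then K * (m - y) powr \<beta> else 0)" for y
    have hint: "(h has_integral K * ((m - a) powr (\<beta> + 1) / (\<beta> + 1))) (cbox 0 t)"
      unfolding h_def using has_integral_powr_reflected[OF \<beta>(1) True] ab
      by (intro has_integral_restrict_closed_subinterval has_integral_mult_right) (auto simp: m_def)
    have le: "norm ((t - y) powr \<beta> * f y) \<le> h y" if "y \<in> {0..t}" for y
    proof (cases "f y = 0 \<or> y = t")
      case False
      hence "a \<le> y" "y < m" using fs that by (auto simp: m_def)
      moreover have "(t - y) powr \<beta> \<le> (m - y) powr \<beta>"
        using \<beta> \<open>y < m\<close> by (intro powr_mono2') (auto simp: m_def)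
      ultimately show ?thesis
        using fb[of y] by (auto simp: h_def abs_mult mult.commute intro: mult_mono)
    qed (auto simp: h_def K)
    have "\<bar>RL_integral \<beta> f t\<bar> \<le> integral {0..t} h"
      using integral_norm_bound_integral[OF fint _ le] hint by (auto simp: RL_integral_def integrable_on_def)
    also have "\<dots> \<le> K * ((b - a) powr (\<beta> + 1) / (\<beta> + 1))"
      using hint True \<beta> K by (auto simp: integral_unique m_def intro!: mult_left_mono divide_right_mono powr_mono2)
    finally show ?thesis by simp
  qed
qed

lemma abs_integral_powr_le_of_support:
  fixes u :: "real \<Rightarrow> real"
  assumes ab: "0 \<le> a" "a \<le> b" "b < t" and r: "r \<le> 0" and ucont: "continuous_on {0..b} u"
    and ub: "\<And>y. \<bar>u y\<bar> \<le> K" and us: "\<And>y. u y \<noteq> 0 \<Longrightarrow> a \<le> y"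
  shows "\<bar>integral {0..b} (\<lambda>y. (t - y) powr r * u y)\<bar> \<le> (t - b) powr r * K * (b - a)"
proof -
  define h where "h y = (if y \<in> cbox a b then (t - b) powr r * K else 0)" for y
  have hint: "(h has_integral (b - a) * ((t - b) powr r * K)) (cbox 0 b)"
    unfolding h_def using ab has_integral_const_real[of "(t - b) powr r * K" a b]
    by (intro has_integral_restrict_closed_subinterval) auto
  have le: "norm ((t - y) powr r * u y) \<le> h y" if "y \<in> {0..b}" for y
  proof (cases "u y = 0")
    case False
    have "(t - y) powr r \<le> (t - b) powr r" using r that ab by (intro powr_mono2') auto
    thus ?thesis using ub[of y] us[OF False] that
      by (auto simp: h_def abs_mult intro: mult_mono)
  qed (use ub[of 0] in \<open>auto simp: h_def\<close>)
  have "(\<lambda>y. (t - y) powr r * u y) integrable_on {0..b}"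
    using ab by (intro integrable_continuous_interval continuous_intros ucont) auto
  from integral_norm_bound_integral[OF this _ le]
  have "\<bar>integral {0..b} (\<lambda>y. (t - y) powr r * u y)\<bar> \<le> integral {0..b} h"
    using hint by (auto simp: integrable_on_def)
  thus ?thesis using hint by (simp add: integral_unique mult.commute mult.left_commute)
qed

lemma greville_between_knots:
  assumes n: "n \<ge> 1" and p: "1 \<le> p"
  shows "knot p n (i + 1) \<le> greville p n i" "greville p n i \<le> knot p n (i + p)"
proof -
  have "real p * knot p n (i + 1) \<le> (\<Sum>k = i + 1..i + p. knot p n k)"
    using sum_bounded_below[of "{i + 1..i + p}" "knot p n (i + 1)" "knot p n"] by (auto intro: knot_mono[OF n])
  thus "knot p n (i + 1) \<le> greville p n i" using p by (simp add: greville_def le_divide_eq mult.commute)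
  have "(\<Sum>k = i + 1..i + p. knot p n k) \<le> real p * knot p n (i + p)"
    using sum_bounded_above[of "{i + 1..i + p}" "knot p n" "knot p n (i + p)"] by (auto intro: knot_mono[OF n])
  thus "greville p n i \<le> knot p n (i + p)" using p by (simp add: greville_def divide_le_eq mult.commute)
qed

lemma greville_interior:
  assumes n: "n \<ge> 1" and p: "1 \<le> p" and i: "2 \<le> i" "i \<le> n + p - 1"
  shows "1 / (real p * n) \<le> greville p n i" "0 < greville p n i" "greville p n i < 1"
proof -
  have "1 / real n = knot p n (p + 2)" using n by (simp add: knot_eq_min)
  also have "\<dots> \<le> knot p n (i + p)" using i by (intro knot_mono[OF n]) auto
  also have "\<dots> = (\<Sum>k\<in>{i + p}. knot p n k)" by simp
  also have "\<dots> \<le> (\<Sum>k = i + 1..i + p. knot p n k)"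
    using p by (intro sum_mono2) (auto simp: knot_nonneg[OF n])
  finally show "1 / (real p * n) \<le> greville p n i"
    using p by (simp add: greville_def field_simps)
  moreover have "0 < 1 / (real p * n)" using n p by simp
  ultimately show "0 < greville p n i" by linarith
  have "knot p n (i + 1) \<le> knot p n (n + p)" using i by (intro knot_mono[OF n]) auto
  also have "knot p n (n + p) < 1" using n by (simp add: knot_eq_min)
  finally have "(\<Sum>k = i + 1..i + p. knot p n k) < (\<Sum>k = i + 1..i + p. 1)"
    using p by (intro sum_strict_mono_ex1) (auto simp: knot_le_1[OF n] intro!: bexI[of _ "i + 1"])
  thus "greville p n i < 1" using p by (simp add: greville_def divide_less_eq)
qed

text \<open>The boundary term of the first differentiation vanishes because \<open>N\<^sup>p\<^sub>j(0) = 0\<close> for \<open>j \<ge> 2\<close>.\<close>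
lemma deriv2_RL_integral_bspline:
  assumes n: "n \<ge> 1" and p: "2 \<le> p" and \<beta>: "-1 < \<beta>" and t: "0 < t" "t < 1" and j: "2 \<le> j"
  shows "(\<lambda>y. (t - y) powr \<beta> * bspline_deriv2 p n p j y) integrable_on {0..t}"
    and "deriv (deriv (RL_integral \<beta> (bspline p n p j))) t
           = t powr \<beta> * bspline_deriv p n p j 0 + RL_integral \<beta> (bspline_deriv2 p n p j) t"
proof -
  define T where "T = (t + 1) / 2"
  have T: "t < T" "T < 1" using t by (auto simp: T_def)
  note S = finite_range_knot[OF n, of p]
  have cont: "continuous_on {0..T} (bspline p n p j)"
    using p by (intro continuous_on_0_if_isCont_interior[OF continuous_at_right_bspline[OF n] _ T(2)]
      isCont_bspline[OF n]) auto
  have cont': "continuous_on {0..T} (bspline_deriv p n p j)"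
    using p by (intro continuous_on_0_if_isCont_interior[OF continuous_at_right_bspline_deriv[OF n] _ T(2)]
      isCont_bspline_deriv[OF n]) auto
  have "bspline p n p j 0 = 0" using bspline_at_0_nonzero[OF n, of p p j] j by auto
  moreover have "(RL_integral \<beta> (bspline p n p j) has_real_derivative
      \<tau> powr \<beta> * bspline p n p j 0 + RL_integral \<beta> (bspline_deriv p n p j) \<tau>) (at \<tau>)"
    if "0 < \<tau>" "\<tau> < T" for \<tau>
    by (rule has_real_derivative_RL_integral(2)[OF \<beta> that cont S, where L = "real p * 2 ^ p * real n"])
      (auto intro: has_real_derivative_bspline[OF n] abs_bspline_deriv_le[OF n])
  ultimately have dRL: "deriv (RL_integral \<beta> (bspline p n p j)) \<tau> = RL_integral \<beta> (bspline_deriv p n p j) \<tau>"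
    if "0 < \<tau>" "\<tau> < T" for \<tau>
    using that by (intro DERIV_imp_deriv) simp
  have D: "(RL_integral \<beta> (bspline_deriv p n p j) has_real_derivative
      t powr \<beta> * bspline_deriv p n p j 0 + RL_integral \<beta> (bspline_deriv2 p n p j) t) (at t)"
    and "(\<lambda>y. (t - y) powr \<beta> * bspline_deriv2 p n p j y) integrable_on {0..t}"
    by (rule has_real_derivative_RL_integral[OF \<beta> t(1) T(1) cont' S, where L = "real p ^ 2 * 2 ^ p * real n ^ 2"];
      auto intro: has_real_derivative_bspline_deriv[OF n] abs_bspline_deriv2_le[OF n])+
  thus "(\<lambda>y. (t - y) powr \<beta> * bspline_deriv2 p n p j y) integrable_on {0..t}" by blast
  show "deriv (deriv (RL_integral \<beta> (bspline p n p j))) t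
      = t powr \<beta> * bspline_deriv p n p j 0 + RL_integral \<beta> (bspline_deriv2 p n p j) t"
    by (rule DERIV_imp_deriv, rule has_field_derivative_transform_within_open[OF D, where S = "{0<..<T}"])
      (use t T dRL in auto)
qed

lemma divide_powr_mult_powr:
  fixes c y e d :: real
  assumes "0 \<le> c" "0 < y"
  shows "(c / y) powr e * y powr d = c powr e * y powr (d - e)"
  using assms by (simp add: powr_divide powr_diff)

definition near_const :: "nat \<Rightarrow> real \<Rightarrow> real" where
  "near_const p \<alpha> = real p powr (\<alpha> - 1) * real p * 2 ^ p
     + real p ^ 2 * 2 ^ p * real (p + 1) powr (2 - \<alpha>) / (2 - \<alpha>)"

lemma abs_deriv2_RL_integral_bspline_near:
  assumes n: "n \<ge> 1" and p: "2 \<le> p" and \<alpha>: "1 < \<alpha>" "\<alpha> < 2"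
    and i: "2 \<le> i" "i \<le> n + p - 1" and j: "2 \<le> j"
  shows "\<bar>deriv (deriv (RL_integral (1 - \<alpha>) (bspline p n p j))) (greville p n i)\<bar> \<le> near_const p \<alpha> * real n powr \<alpha>"
proof -
  define t where "t = greville p n i"
  have t: "1 / (real p * n) \<le> t" "0 < t" "t < 1" using greville_interior[OF n _ i] p by (auto simp: t_def)
  moreover have "-1 < 1 - \<alpha>" using \<alpha> by simp
  ultimately have V: "(\<lambda>y. (t - y) powr (1 - \<alpha>) * bspline_deriv2 p n p j y) integrable_on {0..t}"
    "deriv (deriv (RL_integral (1 - \<alpha>) (bspline p n p j))) t
       = t powr (1 - \<alpha>) * bspline_deriv p n p j 0 + RL_integral (1 - \<alpha>) (bspline_deriv2 p n p j) t"
    using deriv2_RL_integral_bspline[OF n p _ _ t(3) j] by blast+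
  have "\<bar>t powr (1 - \<alpha>) * bspline_deriv p n p j 0\<bar> \<le> (1 / (real p * n)) powr (1 - \<alpha>) * (real p * 2 ^ p * n)"
    using \<alpha> t abs_bspline_deriv_le[OF n, of p p j 0] n p
    by (auto simp: abs_mult intro!: mult_mono powr_mono2')
  also have "\<dots> = real p powr (\<alpha> - 1) * real p * 2 ^ p * real n powr \<alpha>"
    using divide_powr_mult_powr[of "1 / real p" "real n" "1 - \<alpha>" 1] n p
    by (simp add: powr_divide powr_minus_divide[symmetric] powr_minus field_simps)
  finally have D: "\<bar>t powr (1 - \<alpha>) * bspline_deriv p n p j 0\<bar> \<le> \<dots>" .
  have "\<bar>RL_integral (1 - \<alpha>) (bspline_deriv2 p n p j) t\<bar>
      \<le> real p ^ 2 * 2 ^ p * real n ^ 2 * (knot p n (j + p + 1) - knot p n j) powr (1 - \<alpha> + 1) / (1 - \<alpha> + 1)"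
    using \<alpha> V(1) abs_bspline_deriv2_le[OF n] bspline_deriv2_support[OF n, of p p j]
    by (intro abs_RL_integral_le_of_support) (auto simp: knot_nonneg[OF n] knot_mono[OF n])
  also have "\<dots> \<le> real p ^ 2 * 2 ^ p * real n ^ 2 * (real (p + 1) / n) powr (2 - \<alpha>) / (2 - \<alpha>)"
    using \<alpha> knot_diff_le[OF n, of p j "p + 1"] knot_mono[OF n, of j "j + p + 1" p]
    by (auto intro!: divide_right_mono mult_left_mono powr_mono2)
  also have "\<dots> = real p ^ 2 * 2 ^ p * real (p + 1) powr (2 - \<alpha>) / (2 - \<alpha>) * real n powr \<alpha>"
    using divide_powr_mult_powr[of "real (p + 1)" "real n" "2 - \<alpha>" 2] n
    by (simp add: powr_numeral field_simps)
  finally have I: "\<bar>RL_integral (1 - \<alpha>) (bspline_deriv2 p n p j) t\<bar> \<le> \<dots>" .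
  have "near_const p \<alpha> * real n powr \<alpha> = real p powr (\<alpha> - 1) * real p * 2 ^ p * real n powr \<alpha>
      + real p ^ 2 * 2 ^ p * real (p + 1) powr (2 - \<alpha>) / (2 - \<alpha>) * real n powr \<alpha>"
    by (simp add: near_const_def distrib_right)
  moreover have "\<bar>deriv (deriv (RL_integral (1 - \<alpha>) (bspline p n p j))) t\<bar>
      \<le> \<bar>t powr (1 - \<alpha>) * bspline_deriv p n p j 0\<bar> + \<bar>RL_integral (1 - \<alpha>) (bspline_deriv2 p n p j) t\<bar>"
    unfolding V(2) by (rule abs_triangle_ineq)
  ultimately show ?thesis using D I by (simp add: t_def)
qed

lemma deriv2_RL_integral_bspline_eq_0:
  assumes n: "n \<ge> 1" and p: "2 \<le> p" and \<alpha>: "1 < \<alpha>" "\<alpha> < 2"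
    and i: "2 \<le> i" and j: "i + p < j" "j \<le> n + p - 1"
  shows "deriv (deriv (RL_integral (1 - \<alpha>) (bspline p n p j))) (greville p n i) = 0"
proof -
  define t where "t = greville p n i"
  have "knot p n (i + p + 1) - knot p n (i + p) = 1 / n"
    using i j by (intro knot_diff_eq[OF n, THEN trans]) auto
  moreover have "knot p n (i + p + 1) \<le> knot p n j" using j by (intro knot_mono[OF n]) auto
  moreover have "t \<le> knot p n (i + p)" using greville_between_knots[OF n] p by (simp add: t_def)
  moreover have "0 < 1 / real n" using n by simp
  ultimately have tj: "t < knot p n j" by linarith
  have t: "0 < t" "t < 1" using greville_interior[OF n _ i] p j by (auto simp: t_def)
  have "bspline_deriv p n p j 0 = 0" "\<And>y. y \<le> t \<Longrightarrow> bspline_deriv2 p n p j y = 0"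
    using bspline_deriv_support[OF n, of p p j 0] bspline_deriv2_support[OF n, of p p j] tj t by force+
  moreover have "RL_integral (1 - \<alpha>) (bspline_deriv2 p n p j) t = integral {0..t} (\<lambda>y. 0)"
    unfolding RL_integral_def by (intro integral_cong) (simp add: calculation(2))
  ultimately show ?thesis
    using deriv2_RL_integral_bspline(2)[OF n p _ t, of "1 - \<alpha>" j] \<alpha> i j by (simp add: t_def)
qed

lemma abs_deriv2_RL_integral_bspline_far:
  assumes n: "n \<ge> 1" and p: "2 \<le> p" and \<alpha>: "1 < \<alpha>" "\<alpha> < 2"
    and i: "j + p < i" "i \<le> n + p - 1" and j: "1 \<le> j"
  shows "\<bar>deriv (deriv (RL_integral (1 - \<alpha>) (bspline p n p j))) (greville p n i)\<bar>
    \<le> 2 ^ (p + 1) * real (p + 1) * real n powr \<alpha> * real (i - p - j) powr (-1 - \<alpha>)"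
proof -
  define t where "t = greville p n i"
  define a where "a = knot p n j"
  define b where "b = knot p n (j + p + 1)"
  define m where "m = real (i - p - j)"
  have m: "0 < m" using i by (simp add: m_def)
  have "knot p n (i + 1) \<le> t" using greville_between_knots[OF n] p by (simp add: t_def)
  moreover have "knot p n (i + 1) - b = m / n"
    using i by (simp add: b_def m_def knot_diff_eq[OF n])
  ultimately have tb: "m / n \<le> t - b" by simp
  moreover have "0 < m / n" using m n by simp
  ultimately have "b < t" by linarith
  have ab: "0 \<le> a" "a \<le> b" by (simp_all add: a_def b_def knot_nonneg[OF n] knot_mono[OF n])
  have "t < 1" using greville_interior[OF n _ _ i(2)] i p by (auto simp: t_def)
  have ucont: "continuous_on {0..b} (bspline p n p j)"
    using p \<open>b < t\<close> \<open>t < 1\<close>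
    by (intro continuous_on_0_if_isCont_interior[OF continuous_at_right_bspline[OF n]] isCont_bspline[OF n]) auto
  have "\<bar>integral {0..b} (\<lambda>y. (t - y) powr (1 - \<alpha> - 2) * bspline p n p j y)\<bar>
      \<le> (t - b) powr (1 - \<alpha> - 2) * 2 ^ p * (b - a)"
    using ab \<open>b < t\<close> \<alpha> abs_bspline_le[OF n] bspline_support[OF n, of p p j]
    by (intro abs_integral_powr_le_of_support[OF _ _ _ _ ucont]) (auto simp: a_def b_def)
  also have "\<dots> \<le> (m / n) powr (-1 - \<alpha>) * 2 ^ p * (real (p + 1) / n)"
  proof -
    have "(t - b) powr (1 - \<alpha> - 2) \<le> (m / n) powr (-1 - \<alpha>)"
      using tb m n \<alpha> by (simp add: powr_mono2')
    thus ?thesis using ab knot_diff_le[OF n, of p j "p + 1"] by (intro mult_mono) (auto simp: a_def b_def ac_simps)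
  qed
  also have "\<dots> = m powr (-1 - \<alpha>) * real n powr \<alpha> * (2 ^ p * real (p + 1))"
    using divide_powr_mult_powr[of m "real n" "-1 - \<alpha>" "-1"] m n
    by (simp add: powr_minus_divide field_simps)
  finally have I: "\<bar>integral {0..b} (\<lambda>y. (t - y) powr (1 - \<alpha> - 2) * bspline p n p j y)\<bar> \<le> \<dots>" .
  have "\<bar>(1 - \<alpha>) * (1 - \<alpha> - 1)\<bar> \<le> 2"
    using \<alpha> mult_mono[of "\<alpha> - 1" 1 \<alpha> 2] by (simp add: abs_mult)
  from mult_mono[OF this I] have "\<bar>(1 - \<alpha>) * (1 - \<alpha> - 1)
      * integral {0..b} (\<lambda>y. (t - y) powr (1 - \<alpha> - 2) * bspline p n p j y)\<bar>
      \<le> 2 * (m powr (-1 - \<alpha>) * real n powr \<alpha> * (2 ^ p * real (p + 1)))"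
    by (simp add: abs_mult)
  moreover have "bspline p n p j y = 0" if "b \<le> y" for y
    using bspline_support[OF n, of p p j y] that by (auto simp: b_def)
  ultimately show ?thesis
    using ab \<open>b < t\<close> by (simp add: RL_integral_deriv2_beyond_support[OF _ _ ucont] t_def m_def ac_simps)
qed

definition band_decay :: "nat \<Rightarrow> real \<Rightarrow> real \<Rightarrow> real \<Rightarrow> int \<Rightarrow> real" where
  "band_decay p K1 K2 r d = (if d \<in> {-int p..int p} then K1 else 0)
     + (if int p < d then K2 * real (nat (d - int p)) powr r else 0)"

lemma abs_scaled_AL_le_band_decay:
  assumes n: "n \<ge> 1" and p: "2 \<le> p" and \<alpha>: "1 < \<alpha>" "\<alpha> < 2"
    and i: "i \<in> {1..n + p - 2}" and j: "j \<in> {1..n + p - 2}"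
  shows "\<bar>real n powr (- \<alpha>) * AL p n \<alpha> i j\<bar>
    \<le> band_decay p (near_const p \<alpha> / Gamma (2 - \<alpha>)) (2 ^ (p + 1) * real (p + 1) / Gamma (2 - \<alpha>))
         (-1 - \<alpha>) (int i - int j)"
proof -
  define V where "V = deriv (deriv (RL_integral (1 - \<alpha>) (bspline p n p (j + 1)))) (greville p n (i + 1))"
  have G: "0 < Gamma (2 - \<alpha>)" using \<alpha> by simp
  have lhs: "\<bar>real n powr (- \<alpha>) * AL p n \<alpha> i j\<bar> = real n powr (- \<alpha>) * \<bar>V\<bar> / Gamma (2 - \<alpha>)"
    using G by (simp add: AL_def RL_deriv_eq V_def abs_mult)
  have scale: "real n powr (- \<alpha>) * \<bar>V\<bar> / Gamma (2 - \<alpha>) \<le> X / Gamma (2 - \<alpha>)"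
    if "\<bar>V\<bar> \<le> X * real n powr \<alpha>" for X
  proof -
    have "real n powr (- \<alpha>) * \<bar>V\<bar> \<le> real n powr (- \<alpha>) * (X * real n powr \<alpha>)"
      using that by (intro mult_left_mono) auto
    also have "\<dots> = X" using n by (simp add: powr_minus field_simps)
    finally show ?thesis using G by (intro divide_right_mono) auto
  qed
  consider "int i - int j < - int p" | "int i - int j \<in> {-int p..int p}" | "int p < int i - int j"
    by fastforce
  thus ?thesis
  proof cases
    case 1
    hence "V = 0" unfolding V_def using i j by (intro deriv2_RL_integral_bspline_eq_0[OF n p \<alpha>]) auto
    with 1 show ?thesis by (simp add: lhs band_decay_def)
  next
    case 2
    have "\<bar>V\<bar> \<le> near_const p \<alpha> * real n powr \<alpha>"
      unfolding V_def using i j by (intro abs_deriv2_RL_integral_bspline_near[OF n p \<alpha>]) auto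
    with 2 show ?thesis using scale by (auto simp: lhs band_decay_def)
  next
    case 3
    hence "nat (int i - int j - int p) = i - p - j" "i + 1 - p - (j + 1) = i - p - j" by auto
    moreover have "\<bar>V\<bar> \<le> 2 ^ (p + 1) * real (p + 1) * real (i - p - j) powr (-1 - \<alpha>) * real n powr \<alpha>"
      using abs_deriv2_RL_integral_bspline_far[OF n p \<alpha>, of "j + 1" "i + 1"] i 3
      by (auto simp: V_def ac_simps)
    ultimately show ?thesis using 3 scale by (auto simp: lhs band_decay_def)
  qed
qed

lemma sum_band_decay_le:
  fixes g :: "'a \<Rightarrow> int"
  assumes J: "finite J" and inj: "inj_on g J" and K: "0 \<le> K1" "0 \<le> K2" and r: "r < -1"
  shows "(\<Sum>x\<in>J. band_decay p K1 K2 r (g x)) \<le> (2 * real p + 1) * K1 + K2 * (\<Sum>m. real m powr r)"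
proof -
  define J1 where "J1 = {x\<in>J. g x \<in> {-int p..int p}}"
  define J2 where "J2 = {x\<in>J. int p < g x}"
  have "(\<Sum>x\<in>J. band_decay p K1 K2 r (g x)) = (\<Sum>x\<in>J1. K1) + (\<Sum>x\<in>J2. K2 * real (nat (g x - int p)) powr r)"
    unfolding band_decay_def sum.distrib J1_def J2_def sum.inter_filter[OF J] by simp
  moreover have "card J1 \<le> card {-int p..int p}"
    using inj by (intro card_inj_on_le[of g]) (auto simp: J1_def intro: inj_on_subset)
  hence "(\<Sum>x\<in>J1. K1) \<le> (2 * real p + 1) * K1" using K by (simp add: mult_right_mono)
  moreover have "(\<Sum>x\<in>J2. real (nat (g x - int p)) powr r) \<le> (\<Sum>m. real m powr r)"
  proof -
    have "inj_on (\<lambda>x. nat (g x - int p)) J2"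
      using inj by (auto simp: J2_def inj_on_def)
    hence "(\<Sum>x\<in>J2. real (nat (g x - int p)) powr r) = (\<Sum>m\<in>(\<lambda>x. nat (g x - int p)) ` J2. real m powr r)"
      by (simp add: sum.reindex)
    also have "\<dots> \<le> (\<Sum>m. real m powr r)"
      using r J by (intro sum_le_suminf) (auto simp: summable_real_powr_iff J2_def)
    finally show ?thesis .
  qed
  hence "(\<Sum>x\<in>J2. K2 * real (nat (g x - int p)) powr r) \<le> K2 * (\<Sum>m. real m powr r)"
    using K by (simp add: sum_distrib_left[symmetric] mult_left_mono)
  ultimately show ?thesis by linarith
qed

lemma power2_sum_mult_le_weighted:
  fixes b x :: "'a \<Rightarrow> real"
  shows "(\<Sum>j\<in>A. b j * x j)\<^sup>2 \<le> (\<Sum>j\<in>A. \<bar>b j\<bar>) * (\<Sum>j\<in>A. \<bar>b j\<bar> * (x j)\<^sup>2)"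
proof -
  have "(\<Sum>j\<in>A. b j * x j)\<^sup>2 \<le> (\<Sum>j\<in>A. sqrt \<bar>b j\<bar> * (sqrt \<bar>b j\<bar> * \<bar>x j\<bar>))\<^sup>2"
    using sum_abs[of "\<lambda>j. b j * x j" A]
    by (intro power2_le_iff_abs_le[THEN iffD2]) (auto simp: abs_mult mult.assoc[symmetric] intro: sum_nonneg)
  also have "\<dots> \<le> (\<Sum>j\<in>A. (sqrt \<bar>b j\<bar>)\<^sup>2) * (\<Sum>j\<in>A. (sqrt \<bar>b j\<bar> * \<bar>x j\<bar>)\<^sup>2)"
    by (rule Cauchy_Schwarz_ineq_sum)
  finally show ?thesis by (simp add: power_mult_distrib)
qed

lemma norm2_le_of_row_col_sums:
  fixes B :: "nat \<Rightarrow> nat \<Rightarrow> real"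
  assumes C: "0 \<le> C" and row: "\<And>i. i \<in> {1..N} \<Longrightarrow> (\<Sum>j=1..N. \<bar>B i j\<bar>) \<le> C"
    and col: "\<And>j. j \<in> {1..N} \<Longrightarrow> (\<Sum>i=1..N. \<bar>B i j\<bar>) \<le> C"
  shows "norm2 N B \<le> C"
  unfolding norm2_def
proof (rule cSup_least)
  show "{sqrt (\<Sum>i = 1..N. (\<Sum>j = 1..N. B i j * x j)\<^sup>2) | x. (\<Sum>j = 1..N. (x j)\<^sup>2) \<le> 1} \<noteq> {}"
    by (auto intro!: exI[of _ "\<lambda>_. 0"])
next
  fix s assume "s \<in> {sqrt (\<Sum>i = 1..N. (\<Sum>j = 1..N. B i j * x j)\<^sup>2) | x. (\<Sum>j = 1..N. (x j)\<^sup>2) \<le> 1}"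
  then obtain x where s: "s = sqrt (\<Sum>i = 1..N. (\<Sum>j = 1..N. B i j * x j)\<^sup>2)"
    and x: "(\<Sum>j = 1..N. (x j)\<^sup>2) \<le> 1" by blast
  have "(\<Sum>i=1..N. (\<Sum>j=1..N. B i j * x j)\<^sup>2) \<le> (\<Sum>i=1..N. C * (\<Sum>j=1..N. \<bar>B i j\<bar> * (x j)\<^sup>2))"
    using power2_sum_mult_le_weighted row
    by (intro sum_mono order_trans[OF power2_sum_mult_le_weighted] mult_right_mono) (auto intro: sum_nonneg)
  also have "\<dots> = C * (\<Sum>j=1..N. (\<Sum>i=1..N. \<bar>B i j\<bar>) * (x j)\<^sup>2)"
    by (simp add: sum_distrib_left sum_distrib_right, rule sum.swap)
  also have "\<dots> \<le> C * (\<Sum>j=1..N. C * (x j)\<^sup>2)"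
    using col C by (intro mult_left_mono sum_mono mult_right_mono) auto
  also have "\<dots> \<le> C\<^sup>2"
    using x C mult_left_mono[OF x, of "C * C"] by (simp add: sum_distrib_left[symmetric] power2_eq_square)
  finally show "s \<le> C" unfolding s using C real_sqrt_le_mono by fastforce
qed

definition AL_sum_bound :: "nat \<Rightarrow> real \<Rightarrow> real" where
  "AL_sum_bound p \<alpha> = (2 * real p + 1) * (near_const p \<alpha> / Gamma (2 - \<alpha>))
     + 2 ^ (p + 1) * real (p + 1) / Gamma (2 - \<alpha>) * (\<Sum>m. real m powr (-1 - \<alpha>))"

lemma AL_sum_bound_nonneg:
  assumes "1 < \<alpha>" "\<alpha> < 2"
  shows "0 \<le> AL_sum_bound p \<alpha>"
proof -
  have "0 \<le> near_const p \<alpha>" using assms by (simp add: near_const_def)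
  moreover have "0 \<le> (\<Sum>m. real m powr (-1 - \<alpha>))"
    using assms by (intro suminf_nonneg) (auto simp: summable_real_powr_iff)
  ultimately show ?thesis using assms by (simp add: AL_sum_bound_def)
qed

lemma sum_abs_scaled_AL_le:
  assumes n: "n \<ge> 1" and p: "2 \<le> p" and \<alpha>: "1 < \<alpha>" "\<alpha> < 2"
  shows "i \<in> {1..n + p - 2} \<Longrightarrow> (\<Sum>j = 1..n + p - 2. \<bar>real n powr (- \<alpha>) * AL p n \<alpha> i j\<bar>) \<le> AL_sum_bound p \<alpha>"
    and "j \<in> {1..n + p - 2} \<Longrightarrow> (\<Sum>i = 1..n + p - 2. \<bar>real n powr (- \<alpha>) * AL p n \<alpha> i j\<bar>) \<le> AL_sum_bound p \<alpha>"
proof -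
  define K1 where "K1 = near_const p \<alpha> / Gamma (2 - \<alpha>)"
  define K2 where "K2 = 2 ^ (p + 1) * real (p + 1) / Gamma (2 - \<alpha>)"
  have K: "0 \<le> K1" "0 \<le> K2" and r: "-1 - \<alpha> < -1" using \<alpha> by (simp_all add: K1_def K2_def near_const_def)
  note entry = abs_scaled_AL_le_band_decay[OF n p \<alpha>, folded K1_def K2_def]
  have sum_le: "(\<Sum>x = 1..n + p - 2. band_decay p K1 K2 (-1 - \<alpha>) (g x)) \<le> AL_sum_bound p \<alpha>"
    if "inj_on g {1..n + p - 2}" for g
    using sum_band_decay_le[OF _ that K r] by (simp add: AL_sum_bound_def K1_def K2_def)
  show "(\<Sum>j = 1..n + p - 2. \<bar>real n powr (- \<alpha>) * AL p n \<alpha> i j\<bar>) \<le> AL_sum_bound p \<alpha>"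
    if "i \<in> {1..n + p - 2}"
  proof -
    have "(\<Sum>j = 1..n + p - 2. \<bar>real n powr (- \<alpha>) * AL p n \<alpha> i j\<bar>)
        \<le> (\<Sum>j = 1..n + p - 2. band_decay p K1 K2 (-1 - \<alpha>) (int i - int j))"
      by (rule sum_mono) (rule entry[OF that])
    also have "\<dots> \<le> AL_sum_bound p \<alpha>" by (rule sum_le) (auto simp: inj_on_def)
    finally show ?thesis .
  qed
  show "(\<Sum>i = 1..n + p - 2. \<bar>real n powr (- \<alpha>) * AL p n \<alpha> i j\<bar>) \<le> AL_sum_bound p \<alpha>"
    if "j \<in> {1..n + p - 2}"
  proof -
    have "(\<Sum>i = 1..n + p - 2. \<bar>real n powr (- \<alpha>) * AL p n \<alpha> i j\<bar>)
        \<le> (\<Sum>i = 1..n + p - 2. band_decay p K1 K2 (-1 - \<alpha>) (int i - int j))"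
      by (rule sum_mono) (rule entry[OF _ that])
    also have "\<dots> \<le> AL_sum_bound p \<alpha>" by (rule sum_le) (auto simp: inj_on_def)
    finally show ?thesis .
  qed
qed

theorem lemma6p2:
  fixes \<alpha> :: real and p :: nat
  assumes "1 < \<alpha>" "\<alpha> < 2" "2 \<le> p"
  shows "\<exists>C. \<forall>n::nat. 1 \<le> n \<longrightarrow>
           (let N = n + p - 2; B = (\<lambda>i j. real n powr (- \<alpha>) * AL p n \<alpha> i j) in
              norm1 N B \<le> C \<and> norm2 N B \<le> C \<and> norminf N B \<le> C)"
proof (intro exI[of _ "AL_sum_bound p \<alpha>"] allI impI)
  fix n :: nat assume n: "1 \<le> n"
  note sums = sum_abs_scaled_AL_le[OF n assms(3,1,2)]
  have "1 \<le> n + p - 2" using n assms by simp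
  thus "let N = n + p - 2; B = (\<lambda>i j. real n powr (- \<alpha>) * AL p n \<alpha> i j) in
      norm1 N B \<le> AL_sum_bound p \<alpha> \<and> norm2 N B \<le> AL_sum_bound p \<alpha> \<and> norminf N B \<le> AL_sum_bound p \<alpha>"
    using sums AL_sum_bound_nonneg[OF assms(1,2)]
    by (auto simp: Let_def norm1_def norminf_def intro!: Max.boundedI norm2_le_of_row_col_sums)
qed

end
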